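(* Let $d\ge1$, $\alpha_i\in(0,1/i]$ for all $i\in[d+1]$, $P=\mathbb Z_{\ge0}^{d+1}$, and let $t>\exp^{(5d+4)}(1)$ be an integer. Fix reals $a_u$ ($u\in L_t$) and extend them by $a_v:=\sum_{u\in L_t}p(v\to u)a_u$ for $v\in L_m$, $0\le m\le t$. For $j\in[d+1]$ let $\lambda_j:=\lfloor\log^{(2d+2-2j)}(t)\rfloor$ and for $i\in[d+1]$ let $S_j^{\ge i}$ be the set of elements of $L_{\lambda_j}$ with at least $i$ positive entries. Then for all $i,j_1,j_2\in[d+1]$ with $j_1<j_2$, $$\sum_{u\in S_{j_1}^{\ge i}}|a_u|\le\sum_{u\in S_{j_2}^{\ge i}}|a_u|.$$
   Context: Finite model: $P=\mathbb{Z}_{\ge0}^{d+1}$ with $u\le v$ iff $v-u\in\mathbb{Z}_{\ge0}^{d+1}$; $L_t$ = tuples with coordinate sum $t$; $\mathfrak p(v)$ = set of elements covered by $v$, so $|\mathfrak p(v)|$ is the number of positive coordinates of $v$. Path weights: each covering pair $u\lessdot v$ gives a directed edge $u\to v$ of weight $\alpha_{|\mathfrak p(v)|}$; $p(u\to v)$ is the sum over all directed paths from $u$ to $v$ of the product of edge weights, with $p(v\to v)=1$ and $p(u\to v)=0$ if $u\not\le v$. Notation: $\log^{(k)}$ and $\exp^{(k)}$ denote $k$-fold iterates ($\log^{(0)}$ is the identity). *)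

theory Defs
  imports Complex_Main
begin

text \<open>Elements of P = Z_{>=0}^{d+1} are represented as functions v :: nat => nat
  with coordinates 0..d and v i = 0 for i > d.\<close>

definition level :: "nat \<Rightarrow> nat \<Rightarrow> (nat \<Rightarrow> nat) set" where
  "level d t = {v. (\<forall>i. d < i \<longrightarrow> v i = 0) \<and> (\<Sum>i\<le>d. v i) = t}"

definition npos :: "nat \<Rightarrow> (nat \<Rightarrow> nat) \<Rightarrow> nat" where
  "npos d v = card {i. i \<le> d \<and> 0 < v i}"

definition endpt :: "(nat \<Rightarrow> nat) \<Rightarrow> nat list \<Rightarrow> (nat \<Rightarrow> nat)" where
  "endpt u xs = (\<lambda>i. u i + count_list xs i)"

text \<open>Directed paths from u to v in the Hasse diagram (covering edges u -> u + e_i)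
  correspond bijectively to lists of coordinate indices; the edge into w has weight
  alpha (npos w).  p u v is the total weight of all such paths (empty path: weight 1).\<close>
definition pathw :: "nat \<Rightarrow> (nat \<Rightarrow> real) \<Rightarrow> (nat \<Rightarrow> nat) \<Rightarrow> (nat \<Rightarrow> nat) \<Rightarrow> real" where
  "pathw d \<alpha> u v =
     (\<Sum>xs \<in> {xs. length xs = (\<Sum>i\<le>d. v i) - (\<Sum>i\<le>d. u i) \<and> set xs \<subseteq> {..d} \<and> endpt u xs = v}.
        \<Prod>k<length xs. \<alpha> (npos d (endpt u (take (Suc k) xs))))"

definition ext_val :: "nat \<Rightarrow> (nat \<Rightarrow> real) \<Rightarrow> nat \<Rightarrow> ((nat \<Rightarrow> nat) \<Rightarrow> real) \<Rightarrow> (nat \<Rightarrow> nat) \<Rightarrow> real" where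
  "ext_val d \<alpha> t a v = (\<Sum>u\<in>level d t. pathw d \<alpha> v u * a u)"

definition lam :: "nat \<Rightarrow> nat \<Rightarrow> nat \<Rightarrow> nat" where
  "lam d t j = nat \<lfloor>(ln ^^ (2*d + 2 - 2*j)) (real t)\<rfloor>"

definition Sge :: "nat \<Rightarrow> nat \<Rightarrow> nat \<Rightarrow> nat \<Rightarrow> (nat \<Rightarrow> nat) set" where
  "Sge d t j i = {v \<in> level d (lam d t j). i \<le> npos d v}"

end

theory Submission
  imports Defs
begin

text \<open>Write \<open>A\<^sub>m\<close> for the sum of \<open>\<bar>a\<^sub>v\<bar>\<close> over the elements \<open>v\<close> of \<open>L\<^sub>m\<close> with at least \<open>i\<close>
  positive entries. For \<open>m < t\<close> the extension satisfies \<open>a\<^sub>v = \<Sum>\<^sub>k \<alpha>\<^bsub>|\<frak>p(v + e\<^sub>k)|\<^esub> a\<^bsub>v + e\<^sub>k\<^esub>\<close>,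
  so \<open>A\<^sub>m\<close> is at most the sum of \<open>\<alpha>\<^bsub>|\<frak>p(w)|\<^esub> \<bar>a\<^sub>w\<bar>\<close> over the covering pairs \<open>v \<lessdot> w\<close>. Passing to
  \<open>w\<close> cannot lose positive entries, and each \<open>w\<close> covers exactly \<open>|\<frak>p(w)|\<close> elements, so this is
  at most \<open>\<Sum>\<^sub>w |\<frak>p(w)| \<alpha>\<^bsub>|\<frak>p(w)|\<^esub> \<bar>a\<^sub>w\<bar> \<le> A\<^sub>m\<^sub>+\<^sub>1\<close> because \<open>\<alpha>\<^sub>i \<le> 1/i\<close>. Hence \<open>A\<^sub>m\<close> is monotone
  on \<open>m \<le> t\<close>, and the levels \<open>\<lambda>\<^sub>j\<close> increase with \<open>j\<close> and stay below \<open>t\<close> because iterated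
  logarithms of a large \<open>t\<close> decrease with the number of iterations.\<close>

lemma funpow_ln_gt_funpow_exp:
  fixes x :: real
  assumes "k \<le> N" "x > (exp ^^ N) 1"
  shows "(ln ^^ k) x > (exp ^^ (N - k)) 1"
  using assms(1)
proof (induction k)
  case 0
  then show ?case using assms(2) by simp
next
  case (Suc k)
  have N: "N - k = Suc (N - Suc k)" using Suc.prems by simp
  have "(ln ^^ k) x > exp ((exp ^^ (N - Suc k)) 1)" using Suc by (simp add: N)
  then have "ln ((ln ^^ k) x) > ln (exp ((exp ^^ (N - Suc k)) 1))"
    using less_trans[OF exp_gt_zero] by (subst ln_less_cancel_iff) auto
  then show ?case by simp
qed

lemma funpow_ln_antimono:
  fixes x :: real
  assumes "k2 \<le> k1" "k1 \<le> N" "x > (exp ^^ N) 1"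
  shows "(ln ^^ k1) x \<le> (ln ^^ k2) x"
  using assms(1,2)
proof (induction k1 rule: dec_induct)
  case base
  then show ?case by simp
next
  case (step k)
  have "0 < (exp ^^ (N - k)) (1::real)" by (cases "N - k") auto
  then have "0 < (ln ^^ k) x" using funpow_ln_gt_funpow_exp[of k N x] step assms(3) by simp
  then have "ln ((ln ^^ k) x) \<le> (ln ^^ k) x" by (simp add: ln_less_self less_imp_le)
  then show ?case using step by simp
qed

lemma finite_level: "finite (level d m)"
proof (rule finite_subset)
  have "v x \<le> m" if "v \<in> level d m" "x \<le> d" for v x
  proof -
    have "v x \<le> (\<Sum>i\<le>d. v i)" using that(2) by (intro member_le_sum) auto
    then show ?thesis using that(1) by (simp add: level_def)
  qed
  then show "level d m \<subseteq> {f. \<forall>x. (x \<in> {..d} \<longrightarrow> f x \<in> {..m}) \<and> (x \<notin> {..d} \<longrightarrow> f x = 0)}"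
    by (auto simp: level_def)
qed (intro finite_set_of_finite_funs; simp)

abbreviation incr_coord :: "(nat \<Rightarrow> nat) \<Rightarrow> nat \<Rightarrow> nat \<Rightarrow> nat" where
  "incr_coord v k \<equiv> v(k := Suc (v k))"

lemma sum_incr_coord:
  fixes v :: "nat \<Rightarrow> nat"
  assumes "k \<le> d"
  shows "(\<Sum>i\<le>d. incr_coord v k i) = Suc (\<Sum>i\<le>d. v i)"
proof -
  have "(\<Sum>i\<le>d. incr_coord v k i) = (\<Sum>i\<le>d. v i + (if i = k then 1 else 0))"
    by (intro sum.cong) auto
  also have "\<dots> = Suc (\<Sum>i\<le>d. v i)" using assms by (simp add: sum.distrib)
  finally show ?thesis .
qed

lemma incr_coord_in_level: "v \<in> level d m \<Longrightarrow> k \<le> d \<Longrightarrow> incr_coord v k \<in> level d (Suc m)"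
  using sum_incr_coord[of k d v] by (auto simp: level_def)

lemma incr_coord_cancel:
  assumes "incr_coord v k = incr_coord v' k"
  shows "v = v'"
proof
  fix x
  show "v x = v' x" using fun_cong[OF assms, of x] by (cases "x = k") auto
qed

lemma npos_incr_coord: "npos d v \<le> npos d (incr_coord v k)"
  unfolding npos_def by (rule card_mono) auto

lemma npos_in_range:
  assumes "w \<in> level d (Suc m)"
  shows "npos d w \<in> {1..d+1}"
proof -
  have "npos d w \<le> card {..d}" unfolding npos_def by (rule card_mono) auto
  moreover have "\<exists>i\<le>d. 0 < w i"
    using assms by (auto simp: level_def intro: ccontr)
  then have "1 \<le> npos d w" unfolding npos_def by (auto simp: Suc_le_eq card_gt_0_iff)
  ultimately show ?thesis by simp
qed

definition walks :: "nat \<Rightarrow> (nat \<Rightarrow> nat) \<Rightarrow> (nat \<Rightarrow> nat) \<Rightarrow> nat list set" where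
  "walks d v u = {xs. length xs = (\<Sum>i\<le>d. u i) - (\<Sum>i\<le>d. v i) \<and> set xs \<subseteq> {..d} \<and> endpt v xs = u}"

lemma finite_walks: "finite (walks d v u)"
  by (rule finite_subset[OF _ finite_lists_length_eq[of "{..d}" "(\<Sum>i\<le>d. u i) - (\<Sum>i\<le>d. v i)"]]) (auto simp: walks_def)

lemma endpt_Nil [simp]: "endpt v [] = v"
  by (simp add: endpt_def)

lemma endpt_Cons: "endpt v (k # ys) = endpt (incr_coord v k) ys"
  by (auto simp: endpt_def fun_eq_iff)

lemma walks_first_step:
  assumes "(\<Sum>i\<le>d. v i) < (\<Sum>i\<le>d. u i)"
  shows "walks d v u = (\<Union>k\<le>d. Cons k ` walks d (incr_coord v k) u)"
proof -
  have tail: "ys \<in> walks d (incr_coord v k) u" if "k # ys \<in> walks d v u" for k ys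
    using that sum_incr_coord[of k d v] unfolding walks_def
    by (simp add: endpt_Cons del: fun_upd_apply, linarith)
  have Cons: "k # ys \<in> walks d v u" if "k \<le> d" "ys \<in> walks d (incr_coord v k) u" for k ys
    using that sum_incr_coord[of k d v] assms unfolding walks_def
    by (simp add: endpt_Cons del: fun_upd_apply)
  have nonempty: "xs \<noteq> []" if "xs \<in> walks d v u" for xs
    using that assms by (auto simp: walks_def)
  have "xs \<in> (\<Union>k\<le>d. Cons k ` walks d (incr_coord v k) u)" if "xs \<in> walks d v u" for xs
    using that nonempty[OF that] tail by (cases xs) (auto simp: walks_def)
  then show ?thesis using Cons by auto
qed

lemma pathw_first_step:
  assumes "(\<Sum>i\<le>d. v i) < (\<Sum>i\<le>d. u i)"
  shows "pathw d \<alpha> v u = (\<Sum>k\<le>d. \<alpha> (npos d (incr_coord v k)) * pathw d \<alpha> (incr_coord v k) u)"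
proof -
  let ?weight = "\<lambda>v xs. \<Prod>k<length xs. \<alpha> (npos d (endpt v (take (Suc k) xs)))"
  have weight_Cons: "?weight v (k # ys) = \<alpha> (npos d (incr_coord v k)) * ?weight (incr_coord v k) ys"
    for k ys
    by (simp only: length_Cons prod.lessThan_Suc_shift) (simp add: endpt_Cons del: fun_upd_apply)
  have pathw_walks: "pathw d \<alpha> w u = (\<Sum>xs\<in>walks d w u. ?weight w xs)" for w
    by (simp add: pathw_def walks_def)
  have "pathw d \<alpha> v u = (\<Sum>xs\<in>(\<Union>k\<le>d. Cons k ` walks d (incr_coord v k) u). ?weight v xs)"
    by (simp only: pathw_walks walks_first_step[OF assms])
  also have "\<dots> = (\<Sum>k\<le>d. \<Sum>xs\<in>Cons k ` walks d (incr_coord v k) u. ?weight v xs)"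
    by (rule sum.UNION_disjoint) (auto simp: finite_walks)
  also have "\<dots> = (\<Sum>k\<le>d. \<Sum>ys\<in>walks d (incr_coord v k) u. ?weight v (k # ys))"
    by (rule sum.cong[OF refl], subst sum.reindex) (auto simp: inj_on_def)
  also have "\<dots> = (\<Sum>k\<le>d. \<alpha> (npos d (incr_coord v k)) * pathw d \<alpha> (incr_coord v k) u)"
    by (simp only: weight_Cons) (simp add: pathw_walks sum_distrib_left)
  finally show ?thesis .
qed

lemma ext_val_first_step:
  assumes "(\<Sum>i\<le>d. v i) < t"
  shows "ext_val d \<alpha> t a v
    = (\<Sum>k\<le>d. \<alpha> (npos d (incr_coord v k)) * ext_val d \<alpha> t a (incr_coord v k))"
proof -
  have "ext_val d \<alpha> t a v
      = (\<Sum>u\<in>level d t. \<Sum>k\<le>d. \<alpha> (npos d (incr_coord v k)) * (pathw d \<alpha> (incr_coord v k) u * a u))"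
    unfolding ext_val_def
    by (intro sum.cong refl) (use assms in \<open>simp add: level_def pathw_first_step sum_distrib_right mult.assoc\<close>)
  also have "\<dots> = (\<Sum>k\<le>d. \<alpha> (npos d (incr_coord v k)) * ext_val d \<alpha> t a (incr_coord v k))"
    by (subst sum.swap) (simp add: ext_val_def sum_distrib_left)
  finally show ?thesis .
qed

text \<open>Double counting of covering pairs: \<open>(v, k) \<mapsto> (v + e\<^sub>k, k)\<close> is injective, and \<open>k\<close> is then a
  positive coordinate of \<open>v + e\<^sub>k\<close>.\<close>

lemma sum_incr_coord_le_npos_sum:
  fixes G :: "(nat \<Rightarrow> nat) \<Rightarrow> real"
  assumes G_nonneg: "\<And>w. w \<in> level d (Suc m) \<Longrightarrow> 0 \<le> G w"
  shows "(\<Sum>v\<in>{v\<in>level d m. i \<le> npos d v}. \<Sum>k\<le>d. G (incr_coord v k))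
       \<le> (\<Sum>w\<in>{w\<in>level d (Suc m). i \<le> npos d w}. real (npos d w) * G w)"
proof -
  define A where "A = {v\<in>level d m. i \<le> npos d v}"
  define B where "B = {w\<in>level d (Suc m). i \<le> npos d w}"
  define pos where "pos = (\<lambda>w :: nat \<Rightarrow> nat. {k. k \<le> d \<and> 0 < w k})"
  define cover where "cover p = (incr_coord (fst p) (snd p), snd p)" for p :: "(nat \<Rightarrow> nat) \<times> nat"
  have finB: "finite B" unfolding B_def using finite_level by simp
  have cover_inj: "inj_on cover (A \<times> {..d})"
    by (rule inj_onI) (auto simp: cover_def intro: incr_coord_cancel)
  have cover_into: "cover ` (A \<times> {..d}) \<subseteq> Sigma B pos"
  proof (rule image_subsetI)
    fix p assume "p \<in> A \<times> {..d}"
    then show "cover p \<in> Sigma B pos"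
      using incr_coord_in_level[of "fst p" d m "snd p"] npos_incr_coord[of d "fst p" "snd p"]
      by (auto simp: cover_def A_def B_def pos_def)
  qed
  have "(\<Sum>v\<in>A. \<Sum>k\<le>d. G (incr_coord v k)) = (\<Sum>p\<in>A \<times> {..d}. G (fst (cover p)))"
    by (simp add: sum.cartesian_product cover_def case_prod_beta)
  also have "\<dots> = (\<Sum>q\<in>cover ` (A \<times> {..d}). G (fst q))"
    by (simp add: sum.reindex[OF cover_inj])
  also have "\<dots> \<le> (\<Sum>q\<in>Sigma B pos. G (fst q))"
    by (rule sum_mono2) (use finB cover_into G_nonneg in \<open>auto simp: B_def pos_def\<close>)
  also have "\<dots> = (\<Sum>w\<in>B. real (npos d w) * G w)"
    using sum.Sigma[OF finB, of pos "\<lambda>w k. G w"] by (simp add: pos_def npos_def split_def)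
  finally show ?thesis unfolding A_def B_def .
qed

lemma abs_ext_val_mass_le_next_level:
  assumes alpha: "\<forall>i\<in>{1..d+1}. 0 < \<alpha> i \<and> \<alpha> i \<le> 1 / real i"
    and "m < t"
  shows "(\<Sum>v\<in>{v\<in>level d m. i \<le> npos d v}. \<bar>ext_val d \<alpha> t a v\<bar>)
       \<le> (\<Sum>w\<in>{w\<in>level d (Suc m). i \<le> npos d w}. \<bar>ext_val d \<alpha> t a w\<bar>)"
proof -
  define E where "E = ext_val d \<alpha> t a"
  define G where "G w = \<alpha> (npos d w) * \<bar>E w\<bar>" for w
  have alpha_pos: "0 < \<alpha> (npos d w)" and npos_alpha: "real (npos d w) * \<alpha> (npos d w) \<le> 1"
    if "w \<in> level d (Suc m)" for w
    using npos_in_range[OF that] alpha by (auto simp: field_simps)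
  have "\<bar>E v\<bar> \<le> (\<Sum>k\<le>d. G (incr_coord v k))" if "v \<in> level d m" for v
  proof -
    have "\<bar>E v\<bar> = \<bar>\<Sum>k\<le>d. \<alpha> (npos d (incr_coord v k)) * E (incr_coord v k)\<bar>"
      using ext_val_first_step that \<open>m < t\<close> by (simp add: E_def level_def)
    also have "\<dots> \<le> (\<Sum>k\<le>d. \<bar>\<alpha> (npos d (incr_coord v k)) * E (incr_coord v k)\<bar>)"
      by (rule sum_abs)
    also have "\<dots> = (\<Sum>k\<le>d. G (incr_coord v k))"
      by (intro sum.cong refl) (simp add: G_def abs_mult abs_of_pos alpha_pos incr_coord_in_level that)
    finally show ?thesis .
  qed
  then have "(\<Sum>v\<in>{v\<in>level d m. i \<le> npos d v}. \<bar>E v\<bar>)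
      \<le> (\<Sum>v\<in>{v\<in>level d m. i \<le> npos d v}. \<Sum>k\<le>d. G (incr_coord v k))"
    by (intro sum_mono) simp
  also have "\<dots> \<le> (\<Sum>w\<in>{w\<in>level d (Suc m). i \<le> npos d w}. real (npos d w) * G w)"
    by (rule sum_incr_coord_le_npos_sum) (simp add: G_def alpha_pos less_imp_le)
  also have "\<dots> \<le> (\<Sum>w\<in>{w\<in>level d (Suc m). i \<le> npos d w}. \<bar>E w\<bar>)"
    using mult_right_mono[OF npos_alpha abs_ge_zero]
    by (intro sum_mono) (simp add: G_def mult.assoc)
  finally show ?thesis unfolding E_def .
qed

lemma abs_ext_val_mass_mono:
  assumes alpha: "\<forall>i\<in>{1..d+1}. 0 < \<alpha> i \<and> \<alpha> i \<le> 1 / real i"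
    and "m \<le> m'" "m' \<le> t"
  shows "(\<Sum>v\<in>{v\<in>level d m. i \<le> npos d v}. \<bar>ext_val d \<alpha> t a v\<bar>)
       \<le> (\<Sum>w\<in>{w\<in>level d m'. i \<le> npos d w}. \<bar>ext_val d \<alpha> t a w\<bar>)"
  using assms(2,3)
proof (induction m' rule: dec_induct)
  case (step k)
  then have "k < t" by simp
  then show ?case
    using step.IH abs_ext_val_mass_le_next_level[OF alpha \<open>k < t\<close>, where i = i and a = a] by simp
qed simp

lemma lam_mono:
  assumes "real t > (exp ^^ (5*d + 4)) 1" "j1 \<le> j2"
  shows "lam d t j1 \<le> lam d t j2"
proof -
  have "(ln ^^ (2*d + 2 - 2*j1)) (real t) \<le> (ln ^^ (2*d + 2 - 2*j2)) (real t)"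
    using assms by (intro funpow_ln_antimono[of _ _ "5*d + 4"]) auto
  then show ?thesis unfolding lam_def by (intro nat_mono floor_mono)
qed

lemma lam_le:
  assumes "real t > (exp ^^ (5*d + 4)) 1"
  shows "lam d t j \<le> t"
proof -
  have "(ln ^^ (2*d + 2 - 2*j)) (real t) \<le> (ln ^^ 0) (real t)"
    using assms by (intro funpow_ln_antimono[of _ _ "5*d + 4"]) auto
  then have "lam d t j \<le> nat \<lfloor>real t\<rfloor>" unfolding lam_def by (intro nat_mono floor_mono) simp
  then show ?thesis by simp
qed

theorem mainTheorem9:
  fixes d t :: nat and \<alpha> :: "nat \<Rightarrow> real" and a :: "(nat \<Rightarrow> nat) \<Rightarrow> real"
  assumes "1 \<le> d"
    and "\<forall>i\<in>{1..d+1}. 0 < \<alpha> i \<and> \<alpha> i \<le> 1 / real i"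
    and "real t > (exp ^^ (5*d + 4)) 1"
  shows "\<forall>i\<in>{1..d+1}. \<forall>j1\<in>{1..d+1}. \<forall>j2\<in>{1..d+1}. j1 < j2 \<longrightarrow>
           (\<Sum>u\<in>Sge d t j1 i. \<bar>ext_val d \<alpha> t a u\<bar>) \<le> (\<Sum>u\<in>Sge d t j2 i. \<bar>ext_val d \<alpha> t a u\<bar>)"
proof (intro ballI impI)
  fix i j1 j2 assume "j1 \<in> {1..d+1}" "j2 \<in> {1..d+1}" "j1 < j2"
  then have "lam d t j1 \<le> lam d t j2" using lam_mono[OF assms(3)] by simp
  moreover have "lam d t j2 \<le> t" using lam_le[OF assms(3)] .
  ultimately show "(\<Sum>u\<in>Sge d t j1 i. \<bar>ext_val d \<alpha> t a u\<bar>) \<le> (\<Sum>u\<in>Sge d t j2 i. \<bar>ext_val d \<alpha> t a u\<bar>)"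
    unfolding Sge_def by (rule abs_ext_val_mass_mono[OF assms(2)])
qed

end
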